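(* Let $(G,\cdot)$ be a semigroup, $(G,\curlywedge)$ a semilattice on the same set $G$, and $\xi,\delta\subseteq G\times G$ binary relations. Then $(G,\cdot,\curlywedge,\xi,\delta)$ is isomorphic to some transformative $\cap$-semigroup of transformations $(\Phi,\cdot,\cap,\xi_\Phi,\delta_\Phi)$ if and only if all of the following hold: (1) $\xi$ is left regular (i.e. $(u,v)\in\xi\Rightarrow(xu,xv)\in\xi$ for all $x,u,v\in G$) and contains the semilattice order $\zeta$; (2) $\delta$ is a left ideal of $(G,\cdot)$ (i.e. $(x,y)\in\delta\Rightarrow(ux,y)\in\delta$ for all $x,y,u\in G$); (3) for all $x,y,z,u,v\in G$: $x(y\curlywedge z)=xy\curlywedge xz$; \ $x\leqslant y\wedge u\leqslant v\wedge y\downarrow v\Rightarrow u\downarrow x$; \ $x\downarrow y\Rightarrow (x\curlywedge y)u=xu\curlywedge yu$; (4) for every positive integer $n$ and all $x,y\in G$ the following axioms hold: $A_n$: if $\mathfrak{X}_n(x\curlywedge y,\{x\})$ then $x\curlywedge y=x$; $B_n$: if $\mathfrak{X}_n(x\curlywedge y,\{x,y\})$ then $(x,y)\in\xi$; $C_n$: if $\mathfrak{X}_n(xy,\{x\})$ then $(x,y)\in\delta$.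
   Context: Notation on $G$: $x\leqslant y$ iff $x\curlywedge y=x$ (the semilattice order $\zeta$); $x\downarrow y$ iff $(x,y)\in\xi$; $x\vdash y$ iff $(x,y)\in\delta$. $G^*=G\cup\{e\}$ is the semigroup obtained by adjoining a new identity $e\notin G$, with conventions $e\leqslant e$, $e\vdash e$, and $x\vdash e$ for all $x\in G$. The formula $a\boxdot b\leqslant c$ abbreviates $a\vdash b\wedge ab\leqslant c$. For a positive integer $n$, $z\in G$ and $H\subseteq G$, $\mathfrak{X}_n(z,H)$ is the statement: there exist $x_i,y_i,t_i\in G^*$ and $u_i,v_i\in G$ ($1\le i\le 2^n-1$) such that (a) $u_1\downarrow v_1$ and $(u_1\curlywedge v_1)x_1\boxdot y_1\leqslant z t_1$; (b) for every $i$ with $1\le i\le 2^{n-1}-1$: $u_{2i}\downarrow v_{2i}$, $(u_{2i}\curlywedge v_{2i})x_{2i}\boxdot y_{2i}\leqslant u_i t_{2i}$, $u_{2i+1}\downarrow v_{2i+1}$ and $(u_{2i+1}\curlywedge v_{2i+1})x_{2i+1}\boxdot y_{2i+1}\leqslant v_i x_i t_{2i+1}$; (c) for every $i$ with $2^{n-1}\le i\le 2^n-1$: $u_i\in H$ and $v_ix_i\in H$. Transformations: for a nonempty set $A$, a transformation is a partial map $A\to A$ regarded as a subset of $A\times A$, with domain $\mathrm{pr}_1 f$ and image $\mathrm{pr}_2 f$. The product $f\cdot g$ is "first $f$, then $g$": $(f\cdot g)(a)=g(f(a))$, defined exactly when $a\in\mathrm{pr}_1 f$ and $f(a)\in\mathrm{pr}_1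 g$. A transformative $\cap$-semigroup of transformations is $(\Phi,\cdot,\cap,\xi_\Phi,\delta_\Phi)$ where $\Phi$ is a set of transformations of a nonempty set $A$ closed under this product and under set-theoretic intersection, $\xi_\Phi=\{(f,g):f$ and $g$ coincide on $\mathrm{pr}_1 f\cap\mathrm{pr}_1 g\}$, and $\delta_\Phi=\{(f,g):\mathrm{pr}_2 f\subseteq\mathrm{pr}_1 g\}$. *)

theory Defs
  imports Main
begin

definition semigroup_on :: "'a set \<Rightarrow> ('a \<Rightarrow> 'a \<Rightarrow> 'a) \<Rightarrow> bool" where
  "semigroup_on G mult \<longleftrightarrow>
     (\<forall>x\<in>G. \<forall>y\<in>G. mult x y \<in> G) \<and>
     (\<forall>x\<in>G. \<forall>y\<in>G. \<forall>z\<in>G. mult (mult x y) z = mult x (mult y z))"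

definition semilattice_on :: "'a set \<Rightarrow> ('a \<Rightarrow> 'a \<Rightarrow> 'a) \<Rightarrow> bool" where
  "semilattice_on G meet \<longleftrightarrow>
     (\<forall>x\<in>G. \<forall>y\<in>G. meet x y \<in> G) \<and>
     (\<forall>x\<in>G. \<forall>y\<in>G. \<forall>z\<in>G. meet (meet x y) z = meet x (meet y z)) \<and>
     (\<forall>x\<in>G. \<forall>y\<in>G. meet x y = meet y x) \<and>
     (\<forall>x\<in>G. meet x x = x)"

definition sl_le :: "('a \<Rightarrow> 'a \<Rightarrow> 'a) \<Rightarrow> 'a \<Rightarrow> 'a \<Rightarrow> bool" where
  "sl_le meet x y \<longleftrightarrow> meet x y = x"

definition zeta :: "'a set \<Rightarrow> ('a \<Rightarrow> 'a \<Rightarrow> 'a) \<Rightarrow> ('a \<times> 'a) set" where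
  "zeta G meet = {(x, y). x \<in> G \<and> y \<in> G \<and> sl_le meet x y}"

section \<open>The adjoined identity: G* = G \<union> {e}, with e represented by None\<close>

definition Gstar :: "'a set \<Rightarrow> 'a option set" where
  "Gstar G = insert None (Some ` G)"

definition rmul :: "('a \<Rightarrow> 'a \<Rightarrow> 'a) \<Rightarrow> 'a \<Rightarrow> 'a option \<Rightarrow> 'a" where
  "rmul mult a t = (case t of None \<Rightarrow> a | Some s \<Rightarrow> mult a s)"

definition dstar :: "('a \<times> 'a) set \<Rightarrow> 'a \<Rightarrow> 'a option \<Rightarrow> bool" where
  "dstar delta a b = (case b of None \<Rightarrow> True | Some b' \<Rightarrow> (a, b') \<in> delta)"

text \<open>a \<boxdot> b \<le> c abbreviates a \<turnstile> b \<and> ab \<le> c.\<close>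
definition boxdot_le ::
  "('a \<Rightarrow> 'a \<Rightarrow> 'a) \<Rightarrow> ('a \<Rightarrow> 'a \<Rightarrow> 'a) \<Rightarrow> ('a \<times> 'a) set \<Rightarrow> 'a \<Rightarrow> 'a option \<Rightarrow> 'a \<Rightarrow> bool" where
  "boxdot_le mult meet delta a b c \<longleftrightarrow> dstar delta a b \<and> sl_le meet (rmul mult a b) c"

definition XX ::
  "'a set \<Rightarrow> ('a \<Rightarrow> 'a \<Rightarrow> 'a) \<Rightarrow> ('a \<Rightarrow> 'a \<Rightarrow> 'a) \<Rightarrow> ('a \<times> 'a) set \<Rightarrow> ('a \<times> 'a) set
     \<Rightarrow> nat \<Rightarrow> 'a \<Rightarrow> 'a set \<Rightarrow> bool" where
  "XX G mult meet xi delta n z H \<longleftrightarrow>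
    (\<exists>(x :: nat \<Rightarrow> 'a option) (y :: nat \<Rightarrow> 'a option) (t :: nat \<Rightarrow> 'a option)
       (u :: nat \<Rightarrow> 'a) (v :: nat \<Rightarrow> 'a).
       (\<forall>i\<in>{1..2^n - 1}. x i \<in> Gstar G \<and> y i \<in> Gstar G \<and> t i \<in> Gstar G \<and> u i \<in> G \<and> v i \<in> G) \<and>
       (u 1, v 1) \<in> xi \<and>
       boxdot_le mult meet delta (rmul mult (meet (u 1) (v 1)) (x 1)) (y 1) (rmul mult z (t 1)) \<and>
       (\<forall>i\<in>{1..2^(n-1) - 1}.
          (u (2*i), v (2*i)) \<in> xi \<and>
          boxdot_le mult meet delta (rmul mult (meet (u (2*i)) (v (2*i))) (x (2*i))) (y (2*i))
            (rmul mult (u i) (t (2*i))) \<and>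
          (u (2*i+1), v (2*i+1)) \<in> xi \<and>
          boxdot_le mult meet delta (rmul mult (meet (u (2*i+1)) (v (2*i+1))) (x (2*i+1))) (y (2*i+1))
            (rmul mult (rmul mult (v i) (x i)) (t (2*i+1)))) \<and>
       (\<forall>i\<in>{2^(n-1)..2^n - 1}. u i \<in> H \<and> rmul mult (v i) (x i) \<in> H))"

definition axioms_1_to_4 ::
  "'a set \<Rightarrow> ('a \<Rightarrow> 'a \<Rightarrow> 'a) \<Rightarrow> ('a \<Rightarrow> 'a \<Rightarrow> 'a) \<Rightarrow> ('a \<times> 'a) set \<Rightarrow> ('a \<times> 'a) set \<Rightarrow> bool" where
  "axioms_1_to_4 G mult meet xi delta \<longleftrightarrow>
     \<comment> \<open>(1)\<close>
     (\<forall>x\<in>G. \<forall>u\<in>G. \<forall>v\<in>G. (u, v) \<in> xi \<longrightarrow> (mult x u, mult x v) \<in> xi) \<and>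
     zeta G meet \<subseteq> xi \<and>
     \<comment> \<open>(2)\<close>
     (\<forall>x\<in>G. \<forall>y\<in>G. \<forall>u\<in>G. (x, y) \<in> delta \<longrightarrow> (mult u x, y) \<in> delta) \<and>
     \<comment> \<open>(3)\<close>
     (\<forall>x\<in>G. \<forall>y\<in>G. \<forall>z\<in>G. mult x (meet y z) = meet (mult x y) (mult x z)) \<and>
     (\<forall>x\<in>G. \<forall>y\<in>G. \<forall>u\<in>G. \<forall>v\<in>G.
        sl_le meet x y \<and> sl_le meet u v \<and> (y, v) \<in> xi \<longrightarrow> (u, x) \<in> xi) \<and>
     (\<forall>x\<in>G. \<forall>y\<in>G. \<forall>u\<in>G. (x, y) \<in> xi \<longrightarrow> mult (meet x y) u = meet (mult x u) (mult y u)) \<and>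
     \<comment> \<open>(4): axioms A_n, B_n, C_n\<close>
     (\<forall>n::nat. n \<ge> 1 \<longrightarrow> (\<forall>x\<in>G. \<forall>y\<in>G.
        (XX G mult meet xi delta n (meet x y) {x} \<longrightarrow> meet x y = x) \<and>
        (XX G mult meet xi delta n (meet x y) {x, y} \<longrightarrow> (x, y) \<in> xi) \<and>
        (XX G mult meet xi delta n (mult x y) {x} \<longrightarrow> (x, y) \<in> delta)))"

text \<open>A transformation of A: a partial map A \<rightarrow> A, viewed as a subset of A \<times> A.
  Product f\<cdot>g ("first f, then g") is relational composition f O g;
  pr1 = Domain, pr2 = Range.\<close>
definition transformation :: "'b set \<Rightarrow> ('b \<times> 'b) set \<Rightarrow> bool" where
  "transformation A f \<longleftrightarrow> f \<subseteq> A \<times> A \<and> single_valued f"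

definition cap_semigroup_of_transformations :: "'b set \<Rightarrow> ('b \<times> 'b) set set \<Rightarrow> bool" where
  "cap_semigroup_of_transformations A \<Phi> \<longleftrightarrow>
     A \<noteq> {} \<and> (\<forall>f\<in>\<Phi>. transformation A f) \<and>
     (\<forall>f\<in>\<Phi>. \<forall>g\<in>\<Phi>. f O g \<in> \<Phi> \<and> f \<inter> g \<in> \<Phi>)"

definition xi_Phi :: "('b \<times> 'b) set set \<Rightarrow> (('b \<times> 'b) set \<times> ('b \<times> 'b) set) set" where
  "xi_Phi \<Phi> = {(f, g). f \<in> \<Phi> \<and> g \<in> \<Phi> \<and>
     (\<forall>a \<in> Domain f \<inter> Domain g. \<forall>b c. (a, b) \<in> f \<longrightarrow> (a, c) \<in> g \<longrightarrow> b = c)}"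

definition delta_Phi :: "('b \<times> 'b) set set \<Rightarrow> (('b \<times> 'b) set \<times> ('b \<times> 'b) set) set" where
  "delta_Phi \<Phi> = {(f, g). f \<in> \<Phi> \<and> g \<in> \<Phi> \<and> Range f \<subseteq> Domain g}"

definition is_iso_to_transformative ::
  "'a set \<Rightarrow> ('a \<Rightarrow> 'a \<Rightarrow> 'a) \<Rightarrow> ('a \<Rightarrow> 'a \<Rightarrow> 'a) \<Rightarrow> ('a \<times> 'a) set \<Rightarrow> ('a \<times> 'a) set
     \<Rightarrow> 'b set \<Rightarrow> ('b \<times> 'b) set set \<Rightarrow> ('a \<Rightarrow> ('b \<times> 'b) set) \<Rightarrow> bool" where
  "is_iso_to_transformative G mult meet xi delta A \<Phi> h \<longleftrightarrow>
     cap_semigroup_of_transformations A \<Phi> \<and> bij_betw h G \<Phi> \<and>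
     (\<forall>x\<in>G. \<forall>y\<in>G.
        h (mult x y) = h x O h y \<and>
        h (meet x y) = h x \<inter> h y \<and>
        ((x, y) \<in> xi \<longleftrightarrow> (h x, h y) \<in> xi_Phi \<Phi>) \<and>
        ((x, y) \<in> delta \<longleftrightarrow> (h x, h y) \<in> delta_Phi \<Phi>))"

end

theory Submission
  imports Defs
begin

text \<open>Read X_n(z, H) as a derivation of height n of z from hypotheses H in a calculus with one
  rule: from u and vx infer w whenever u \<downarrow> v and (u \<curlywedge> v)x \<boxdot> y \<le> wt. In a semigroup of
  transformations this rule preserves "the point a lies in the domain", so a derivation of z from
  {x} gives dom x \<subseteq> dom z; this yields A_n, B_n and C_n, while (1)--(3) are elementary facts
  about partial maps. Conversely, under the axioms let g \<in> G act on points (p, q, a), a \<in> G*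
  derivable from {p, q}, by a \<mapsto> ag. The derivation rules make this a homomorphism for both
  operations, and A_n, B_n, C_n say precisely that it is injective and reflects \<xi> and \<delta>.
  Finally the point set is small enough to be moved injectively into G + \<nat>.\<close>

locale semigroup_semilattice =
  fixes G :: "'a set" and mult meet :: "'a \<Rightarrow> 'a \<Rightarrow> 'a" and xi delta :: "('a \<times> 'a) set"
  assumes semigroup: "semigroup_on G mult" and semilattice: "semilattice_on G meet"
begin

lemma mult_closed [simp]: "x \<in> G \<Longrightarrow> y \<in> G \<Longrightarrow> mult x y \<in> G"
  using semigroup unfolding semigroup_on_def by blast

lemma mult_assoc: "x \<in> G \<Longrightarrow> y \<in> G \<Longrightarrow> z \<in> G \<Longrightarrow> mult (mult x y) z = mult x (mult y z)"
  using semigroup unfolding semigroup_on_def by blast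

lemma meet_closed [simp]: "x \<in> G \<Longrightarrow> y \<in> G \<Longrightarrow> meet x y \<in> G"
  using semilattice unfolding semilattice_on_def by blast

lemma meet_assoc: "x \<in> G \<Longrightarrow> y \<in> G \<Longrightarrow> z \<in> G \<Longrightarrow> meet (meet x y) z = meet x (meet y z)"
  using semilattice unfolding semilattice_on_def by blast

lemma meet_comm: "x \<in> G \<Longrightarrow> y \<in> G \<Longrightarrow> meet x y = meet y x"
  using semilattice unfolding semilattice_on_def by blast

lemma meet_idem [simp]: "x \<in> G \<Longrightarrow> meet x x = x"
  using semilattice unfolding semilattice_on_def by blast

lemma meet_left_comm: "x \<in> G \<Longrightarrow> y \<in> G \<Longrightarrow> z \<in> G \<Longrightarrow> meet x (meet y z) = meet y (meet x z)"
  by (metis meet_assoc meet_comm)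

lemma meet_absorb1: "x \<in> G \<Longrightarrow> y \<in> G \<Longrightarrow> meet (meet x y) x = meet x y"
  by (metis meet_assoc meet_comm meet_idem)

lemma meet_absorb2: "x \<in> G \<Longrightarrow> y \<in> G \<Longrightarrow> meet (meet x y) y = meet x y"
  by (metis meet_assoc meet_idem)

lemma None_in_Gstar [simp]: "None \<in> Gstar G"
  by (simp add: Gstar_def)

lemma Some_in_Gstar_iff [simp]: "Some x \<in> Gstar G \<longleftrightarrow> x \<in> G"
  by (auto simp: Gstar_def)

lemma rmul_None [simp]: "rmul mult w None = w"
  by (simp add: rmul_def)

lemma rmul_Some [simp]: "rmul mult w (Some s) = mult w s"
  by (simp add: rmul_def)

lemma rmul_closed [simp]: "w \<in> G \<Longrightarrow> t \<in> Gstar G \<Longrightarrow> rmul mult w t \<in> G"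
  by (auto simp: Gstar_def)

section \<open>Derivations\<close>

text \<open>The condition at node j of the tree in X_n(z, H), whose label w is z at the root 1 and
  u_i, v_i x_i at the children 2i, 2i + 1 of node i. It lets node j derive w from the labels of
  its two children, so X_n(z, H) is a derivation of z from H of height n in the calculus
  derivable below.\<close>

definition tree_node ::
  "(nat \<Rightarrow> 'a) \<Rightarrow> (nat \<Rightarrow> 'a) \<Rightarrow> (nat \<Rightarrow> 'a option) \<Rightarrow> (nat \<Rightarrow> 'a option) \<Rightarrow> (nat \<Rightarrow> 'a option)
     \<Rightarrow> nat \<Rightarrow> 'a \<Rightarrow> bool" where
  "tree_node u v x y t j w \<longleftrightarrow>
     (u j, v j) \<in> xi \<and> boxdot_le mult meet delta (rmul mult (meet (u j) (v j)) (x j)) (y j) (rmul mult w (t j))"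

definition derivation_tree ::
  "nat \<Rightarrow> 'a \<Rightarrow> 'a set \<Rightarrow> (nat \<Rightarrow> 'a option) \<Rightarrow> (nat \<Rightarrow> 'a option) \<Rightarrow> (nat \<Rightarrow> 'a option)
     \<Rightarrow> (nat \<Rightarrow> 'a) \<Rightarrow> (nat \<Rightarrow> 'a) \<Rightarrow> bool" where
  "derivation_tree n z H x y t u v \<longleftrightarrow>
     (\<forall>i\<in>{1..2^n - 1}. x i \<in> Gstar G \<and> y i \<in> Gstar G \<and> t i \<in> Gstar G \<and> u i \<in> G \<and> v i \<in> G) \<and>
     tree_node u v x y t 1 z \<and>
     (\<forall>i\<in>{1..2^(n-1) - 1}.
        tree_node u v x y t (2*i) (u i) \<and> tree_node u v x y t (2*i+1) (rmul mult (v i) (x i))) \<and>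
     (\<forall>i\<in>{2^(n-1)..2^n - 1}. u i \<in> H \<and> rmul mult (v i) (x i) \<in> H)"

lemma XX_iff_derivation_tree:
  "XX G mult meet xi delta n z H \<longleftrightarrow> (\<exists>x y t u v. derivation_tree n z H x y t u v)"
  unfolding XX_def derivation_tree_def tree_node_def by blast

inductive derivable :: "'a set \<Rightarrow> 'a \<Rightarrow> bool" for H where
  hyp: "w \<in> H \<Longrightarrow> w \<in> G \<Longrightarrow> derivable H w"
| node: "u \<in> G \<Longrightarrow> v \<in> G \<Longrightarrow> x \<in> Gstar G \<Longrightarrow> y \<in> Gstar G \<Longrightarrow> t \<in> Gstar G \<Longrightarrow> w \<in> G \<Longrightarrow>
    (u, v) \<in> xi \<Longrightarrow> boxdot_le mult meet delta (rmul mult (meet u v) x) y (rmul mult w t) \<Longrightarrow>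
    derivable H u \<Longrightarrow> derivable H (rmul mult v x) \<Longrightarrow> derivable H w"

lemma derivable_in_G: "derivable H z \<Longrightarrow> z \<in> G"
  by (induction rule: derivable.induct) auto

lemma derivable_tree_node:
  assumes "tree_node u v x y t j w" "u j \<in> G" "v j \<in> G" "x j \<in> Gstar G" "y j \<in> Gstar G"
    "t j \<in> Gstar G" "w \<in> G" "derivable H (u j)" "derivable H (rmul mult (v j) (x j))"
  shows "derivable H w"
  using assms unfolding tree_node_def by (blast intro: derivable.node)

lemma XX_imp_derivable:
  assumes XX: "XX G mult meet xi delta n z H" and n: "n \<ge> 1" and z: "z \<in> G"
  shows "derivable H z"
proof -
  from XX obtain x y t u v where
    mem: "\<forall>i\<in>{1..2^n - 1}. x i \<in> Gstar G \<and> y i \<in> Gstar G \<and> t i \<in> Gstar G \<and> u i \<in> G \<and> v i \<in> G"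
    and root: "tree_node u v x y t 1 z"
    and inner: "\<forall>i\<in>{1..2^(n-1) - 1}.
       tree_node u v x y t (2*i) (u i) \<and> tree_node u v x y t (2*i+1) (rmul mult (v i) (x i))"
    and leaves: "\<forall>i\<in>{2^(n-1)..2^n - 1}. u i \<in> H \<and> rmul mult (v i) (x i) \<in> H"
    unfolding XX_iff_derivation_tree derivation_tree_def by blast
  have pow: "(2::nat)^n = 2 * 2^(n-1)"
    using n by (metis Suc_diff_le diff_Suc_1 power_Suc)
  have children: "derivable H (u i) \<and> derivable H (rmul mult (v i) (x i))"
    if "i \<in> {1..2^n - 1}" for i
    using that
  proof (induction "2^n - i" arbitrary: i rule: less_induct)
    case less
    show ?case
    proof (cases "2^(n-1) \<le> i")
      case True
      then show ?thesis
        using leaves less.prems mem by (auto intro: derivable.hyp)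
    next
      case False
      then have i: "i \<in> {1..2^(n-1) - 1}" and c: "2*i \<in> {1..2^n - 1}" "2*i+1 \<in> {1..2^n - 1}"
        using less.prems pow by auto
      have "derivable H (u (2*i)) \<and> derivable H (rmul mult (v (2*i)) (x (2*i)))"
        and "derivable H (u (2*i+1)) \<and> derivable H (rmul mult (v (2*i+1)) (x (2*i+1)))"
        using less.hyps c less.prems by auto
      with inner[rule_format, OF i] mem[rule_format, OF c(1)] mem[rule_format, OF c(2)]
        mem[rule_format, OF less.prems]
      show ?thesis
        by (metis derivable_tree_node rmul_closed)
    qed
  qed
  have "(2::nat) \<le> 2^n"
    using n by (simp add: self_le_power)
  then have "1 \<in> {1..2^n - 1::nat}"
    by auto
  with children mem root z show ?thesis
    by (metis derivable_tree_node)
qed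

end

section \<open>Grafting derivation trees\<close>

text \<open>Writing i \<ge> 2 in binary as 1 b w, the node i of a tree of height n + 1 is the node 1 w of
  its left (b = 0) or right (b = 1) subtree of height n.\<close>

fun graft_index :: "nat \<Rightarrow> nat" where
  "graft_index i = (if i \<le> 3 then 1 else 2 * graft_index (i div 2) + i mod 2)"

fun in_right_subtree :: "nat \<Rightarrow> bool" where
  "in_right_subtree i = (if i \<le> 3 then i = 3 else in_right_subtree (i div 2))"

declare graft_index.simps [simp del] in_right_subtree.simps [simp del]

lemma graft_index_ge_1: "1 \<le> graft_index i"
  by (induction i rule: graft_index.induct) (subst graft_index.simps, auto)

lemma graft_index_double:
  assumes "2 \<le> i"
  shows "graft_index (2*i) = 2 * graft_index i" "graft_index (Suc (2*i)) = Suc (2 * graft_index i)"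
    "in_right_subtree (2*i) = in_right_subtree i" "in_right_subtree (Suc (2*i)) = in_right_subtree i"
  using assms graft_index.simps[of "2*i"] graft_index.simps[of "2*i+1"]
    in_right_subtree.simps[of "2*i"] in_right_subtree.simps[of "2*i+1"] by simp_all

lemma graft_index_less: "2 \<le> i \<Longrightarrow> i < 2^(Suc m) \<Longrightarrow> graft_index i < 2^m"
proof (induction i arbitrary: m rule: less_induct)
  case (less i)
  show ?case
  proof (cases "i \<le> 3")
    case True
    then have "m \<noteq> 0"
      using less.prems by (cases m) auto
    then have "(2::nat) \<le> 2^m"
      by (simp add: self_le_power)
    then show ?thesis
      using True by (subst graft_index.simps) simp
  next
    case False
    then obtain m' where m: "m = Suc m'"
      using less.prems by (cases m) auto
    have "graft_index (i div 2) < 2^m'"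
      using less.IH[of "i div 2" m'] less.prems m False by auto
    then show ?thesis
      using False m by (subst graft_index.simps) auto
  qed
qed

lemma graft_index_ge: "2 \<le> i \<Longrightarrow> 2^(Suc m) \<le> i \<Longrightarrow> 2^m \<le> graft_index i"
proof (induction i arbitrary: m rule: less_induct)
  case (less i)
  show ?case
  proof (cases m)
    case 0
    then show ?thesis
      using graft_index_ge_1 by simp
  next
    case (Suc m')
    have "(4::nat) \<le> 2^(Suc (Suc m'))"
      using one_le_power[of "2::nat" m'] by simp
    then have big: "\<not> i \<le> 3"
      using less.prems(2)[unfolded Suc] by linarith
    have "2^(Suc m') \<le> i div 2"
      using less.prems Suc by simp
    then have "2^m' \<le> graft_index (i div 2)"
      using less.IH[of "i div 2" m'] big by auto
    then show ?thesis
      using big Suc by (subst graft_index.simps) auto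
  qed
qed

definition graft :: "'x \<Rightarrow> (nat \<Rightarrow> 'x) \<Rightarrow> (nat \<Rightarrow> 'x) \<Rightarrow> nat \<Rightarrow> 'x" where
  "graft r f g i =
     (if i = 1 then r else if in_right_subtree i then g (graft_index i) else f (graft_index i))"

lemma graft_simps:
  "graft r f g 1 = r" "graft r f g (Suc 0) = r" "graft r f g 2 = f 1" "graft r f g 3 = g 1"
  "2 \<le> i \<Longrightarrow> graft r f g i = (if in_right_subtree i then g (graft_index i) else f (graft_index i))"
  unfolding graft_def by (simp_all add: graft_index.simps in_right_subtree.simps)

context semigroup_semilattice
begin

lemma tree_node_graft:
  "tree_node (graft u0 u1 u2) (graft v0 v1 v2) (graft x0 x1 x2) (graft y0 y1 y2) (graft t0 t1 t2) j w
   \<longleftrightarrow> (if j = 1 then (u0, v0) \<in> xi \<and>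
          boxdot_le mult meet delta (rmul mult (meet u0 v0) x0) y0 (rmul mult w t0)
        else if in_right_subtree j then tree_node u2 v2 x2 y2 t2 (graft_index j) w
        else tree_node u1 v1 x1 y1 t1 (graft_index j) w)"
  by (simp add: tree_node_def graft_def)

lemma XX_graft:
  assumes n: "n \<ge> 1"
    and left: "XX G mult meet xi delta n u0 H" and right: "XX G mult meet xi delta n (rmul mult v0 x0) H"
    and in_G: "u0 \<in> G" "v0 \<in> G" "x0 \<in> Gstar G" "y0 \<in> Gstar G" "t0 \<in> Gstar G"
    and root: "(u0, v0) \<in> xi" "boxdot_le mult meet delta (rmul mult (meet u0 v0) x0) y0 (rmul mult z t0)"
  shows "XX G mult meet xi delta (Suc n) z H"
proof -
  from left right obtain x1 y1 t1 u1 v1 x2 y2 t2 u2 v2 where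
    T1: "derivation_tree n u0 H x1 y1 t1 u1 v1" and T2: "derivation_tree n (rmul mult v0 x0) H x2 y2 t2 u2 v2"
    unfolding XX_iff_derivation_tree by blast
  let ?x = "graft x0 x1 x2" and ?y = "graft y0 y1 y2" and ?t = "graft t0 t1 t2"
    and ?u = "graft u0 u1 u2" and ?v = "graft v0 v1 v2"
  have index_range: "graft_index i \<in> {1..2^n - 1}" if "i \<in> {2..2^(Suc n) - 1}" for i
  proof -
    have "2 \<le> i" "i < 2^(Suc n)"
      using that by (auto simp del: power_Suc)
    then show ?thesis
      using graft_index_less[of i n] graft_index_ge_1[of i] by auto
  qed
  have members: "?x i \<in> Gstar G \<and> ?y i \<in> Gstar G \<and> ?t i \<in> Gstar G \<and> ?u i \<in> G \<and> ?v i \<in> G"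
    if i: "i \<in> {1..2^(Suc n) - 1}" for i
  proof (cases "i = 1")
    case True
    then show ?thesis using in_G by (simp add: graft_simps)
  next
    case False
    with i index_range[of i] T1 T2 show ?thesis
      by (simp add: graft_simps derivation_tree_def)
  qed
  have inner: "tree_node ?u ?v ?x ?y ?t (2*i) (?u i) \<and> tree_node ?u ?v ?x ?y ?t (2*i+1) (rmul mult (?v i) (?x i))"
    if i: "i \<in> {1..2^(Suc n - 1) - 1}" for i
  proof (cases "i = 1")
    case True
    then show ?thesis
      using T1 T2 by (simp add: tree_node_graft derivation_tree_def graft_simps
          graft_index.simps in_right_subtree.simps)
  next
    case False
    then have i2: "2 \<le> i" "i < 2^n"
      using i by auto
    have "graft_index i \<in> {1..2^(n-1) - 1}"
      using graft_index_less[of i "n-1"] graft_index_ge_1[of i] i2 n by simp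
    with T1 T2 i2 show ?thesis
      by (simp add: tree_node_graft derivation_tree_def graft_simps graft_index_double)
  qed
  have leaves: "?u i \<in> H \<and> rmul mult (?v i) (?x i) \<in> H"
    if i: "i \<in> {2^(Suc n - 1)..2^(Suc n) - 1}" for i
  proof -
    have "(2::nat) \<le> 2^n"
      using n by (simp add: self_le_power)
    then have i2: "2 \<le> i" "2^n \<le> i" "i < 2^(Suc n)"
      using i by auto
    have "graft_index i \<in> {2^(n-1)..2^n - 1}"
      using graft_index_ge[of i "n-1"] graft_index_less[of i n] i2 n by simp
    with T1 T2 i2 show ?thesis
      by (simp add: derivation_tree_def graft_simps)
  qed
  have "tree_node ?u ?v ?x ?y ?t 1 z"
    using root by (simp add: tree_node_graft)
  with members inner leaves have "derivation_tree (Suc n) z H ?x ?y ?t ?u ?v"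
    unfolding derivation_tree_def by blast
  then show ?thesis
    unfolding XX_iff_derivation_tree by blast
qed

lemma XX_hyp:
  assumes "w \<in> H" "w \<in> G" "(w, w) \<in> xi"
  shows "XX G mult meet xi delta 1 w H"
proof -
  have "derivation_tree 1 w H (\<lambda>_. None) (\<lambda>_. None) (\<lambda>_. None) (\<lambda>_. w) (\<lambda>_. w)"
    using assms by (simp add: derivation_tree_def tree_node_def boxdot_le_def dstar_def sl_le_def)
  then show ?thesis
    unfolding XX_iff_derivation_tree by blast
qed

lemma XX_Suc:
  assumes "n \<ge> 1" "z \<in> G" "(z, z) \<in> xi" "XX G mult meet xi delta n z H"
  shows "XX G mult meet xi delta (Suc n) z H"
  by (rule XX_graft[of n z H z None None None z])
    (use assms in \<open>simp_all add: boxdot_le_def dstar_def sl_le_def\<close>)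

lemma XX_mono:
  assumes "1 \<le> n" "n \<le> m" "z \<in> G" "(z, z) \<in> xi" "XX G mult meet xi delta n z H"
  shows "XX G mult meet xi delta m z H"
  using assms(2,5)
proof (induction m rule: dec_induct)
  case (step m)
  then show ?case
    using XX_Suc assms(1,3,4) by simp
qed

lemma derivable_imp_XX:
  assumes refl: "\<forall>x\<in>G. (x, x) \<in> xi" and der: "derivable H z"
  shows "\<exists>n\<ge>1. XX G mult meet xi delta n z H"
  using der
proof (induction rule: derivable.induct)
  case (hyp w)
  then show ?case
    using XX_hyp refl by blast
next
  case (node u v x y t w)
  from node.IH obtain n1 n2 where n: "n1 \<ge> 1" "n2 \<ge> 1"
    and left: "XX G mult meet xi delta n1 u H" and right: "XX G mult meet xi delta n2 (rmul mult v x) H"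
    by blast
  let ?m = "max n1 n2"
  have "XX G mult meet xi delta ?m u H" "XX G mult meet xi delta ?m (rmul mult v x) H"
    using XX_mono[OF n(1) _ _ _ left] XX_mono[OF n(2) _ _ _ right] node.hyps refl by simp_all
  then have "XX G mult meet xi delta (Suc ?m) w H"
    using n node.hyps by (intro XX_graft) simp_all
  then show ?case
    by (intro exI[of _ "Suc ?m"]) simp
qed

end

section \<open>Necessity\<close>

locale transformation_representation = semigroup_semilattice G mult meet xi delta
  for G :: "'a set" and mult meet xi delta +
  fixes A :: "'b set" and \<Phi> :: "('b \<times> 'b) set set" and h :: "'a \<Rightarrow> ('b \<times> 'b) set"
  assumes iso: "is_iso_to_transformative G mult meet xi delta A \<Phi> h"
begin

lemma h_in_Phi: "x \<in> G \<Longrightarrow> h x \<in> \<Phi>"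
  using iso unfolding is_iso_to_transformative_def bij_betw_def by blast

lemma h_inj: "x \<in> G \<Longrightarrow> y \<in> G \<Longrightarrow> h x = h y \<Longrightarrow> x = y"
  using iso unfolding is_iso_to_transformative_def bij_betw_def inj_on_def by blast

lemma h_mult: "x \<in> G \<Longrightarrow> y \<in> G \<Longrightarrow> h (mult x y) = h x O h y"
  using iso unfolding is_iso_to_transformative_def by blast

lemma h_meet: "x \<in> G \<Longrightarrow> y \<in> G \<Longrightarrow> h (meet x y) = h x \<inter> h y"
  using iso unfolding is_iso_to_transformative_def by blast

lemma h_single_valued: "x \<in> G \<Longrightarrow> single_valued (h x)"
  using iso h_in_Phi
  unfolding is_iso_to_transformative_def cap_semigroup_of_transformations_def transformation_def
  by blast

lemma xi_iff_compatible:
  assumes "x \<in> G" "y \<in> G"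
  shows "(x, y) \<in> xi \<longleftrightarrow> (\<forall>a b c. (a, b) \<in> h x \<longrightarrow> (a, c) \<in> h y \<longrightarrow> b = c)"
proof -
  have "(x, y) \<in> xi \<longleftrightarrow> (h x, h y) \<in> xi_Phi \<Phi>"
    using iso assms unfolding is_iso_to_transformative_def by blast
  then show ?thesis
    unfolding xi_Phi_def using h_in_Phi assms by blast
qed

lemma delta_iff_Range_subset_Domain:
  assumes "x \<in> G" "y \<in> G"
  shows "(x, y) \<in> delta \<longleftrightarrow> Range (h x) \<subseteq> Domain (h y)"
proof -
  have "(x, y) \<in> delta \<longleftrightarrow> (h x, h y) \<in> delta_Phi \<Phi>"
    using iso assms unfolding is_iso_to_transformative_def by blast
  then show ?thesis
    unfolding delta_Phi_def using h_in_Phi assms by blast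
qed

lemma sl_le_iff_subset:
  assumes "x \<in> G" "y \<in> G"
  shows "sl_le meet x y \<longleftrightarrow> h x \<subseteq> h y"
proof
  assume "sl_le meet x y"
  then show "h x \<subseteq> h y"
    using h_meet[OF assms] unfolding sl_le_def by (metis Int_lower2)
next
  assume "h x \<subseteq> h y"
  then have "h (meet x y) = h x"
    using h_meet[OF assms] by blast
  then show "sl_le meet x y"
    using h_inj[of "meet x y" x] assms unfolding sl_le_def by simp
qed

lemma h_rmul:
  "w \<in> G \<Longrightarrow> t \<in> Gstar G \<Longrightarrow> h (rmul mult w t) = h w O (case t of None \<Rightarrow> Id | Some s \<Rightarrow> h s)"
  by (auto simp: Gstar_def h_mult)

lemma derivable_Domain:
  assumes "derivable H z" "\<forall>w\<in>H. a \<in> Domain (h w)"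
  shows "a \<in> Domain (h z)"
  using assms
proof (induction rule: derivable.induct)
  case (hyp w)
  then show ?case by blast
next
  case (node u v x y t w)
  let ?p = "rmul mult (meet u v) x"
  from node.IH node.prems obtain b b' c where
    "(a, b') \<in> h u" "(a, b) \<in> h v" and bc: "(b, c) \<in> (case x of None \<Rightarrow> Id | Some s \<Rightarrow> h s)"
    using h_rmul[of v x] node.hyps by blast
  moreover have "b' = b"
    using xi_iff_compatible node.hyps calculation by blast
  ultimately have "(a, b) \<in> h (meet u v)"
    using h_meet node.hyps by simp
  then have ac: "(a, c) \<in> h ?p"
    using h_rmul[of "meet u v" x] node.hyps bc by auto
  have "a \<in> Domain (h (rmul mult ?p y))"
  proof (cases y)
    case None
    then show ?thesis
      using ac by auto
  next
    case (Some s)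
    then have "(?p, s) \<in> delta" "s \<in> G"
      using node.hyps unfolding boxdot_le_def dstar_def by auto
    then have "c \<in> Domain (h s)"
      using delta_iff_Range_subset_Domain ac node.hyps by (meson RangeI rmul_closed meet_closed subsetD)
    then show ?thesis
      using ac Some h_mult node.hyps by (auto simp: h_rmul)
  qed
  moreover have "h (rmul mult ?p y) \<subseteq> h (rmul mult w t)"
    using sl_le_iff_subset node.hyps unfolding boxdot_le_def by simp
  ultimately have "a \<in> Domain (h (rmul mult w t))"
    by blast
  then show ?case
    using h_rmul[of w t] node.hyps by blast
qed

lemma XX_Domain:
  assumes "XX G mult meet xi delta n z H" "n \<ge> 1" "z \<in> G" "\<forall>w\<in>H. a \<in> Domain (h w)"
  shows "a \<in> Domain (h z)"
  using assms XX_imp_derivable derivable_Domain by blast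

lemma xi_left_regular:
  assumes "x \<in> G" "u \<in> G" "v \<in> G" "(u, v) \<in> xi"
  shows "(mult x u, mult x v) \<in> xi"
proof -
  have "b = c" if "(a, b) \<in> h x O h u" "(a, c) \<in> h x O h v" for a b c
    using that assms h_single_valued[of x] xi_iff_compatible[of u v]
    unfolding single_valued_def by blast
  then show ?thesis
    using assms xi_iff_compatible h_mult by simp
qed

lemma zeta_subset_xi: "zeta G meet \<subseteq> xi"
proof
  fix p assume "p \<in> zeta G meet"
  then obtain x y where p: "p = (x, y)" "x \<in> G" "y \<in> G" "h x \<subseteq> h y"
    unfolding zeta_def using sl_le_iff_subset by blast
  then show "p \<in> xi"
    using xi_iff_compatible[of x y] h_single_valued[of y] unfolding single_valued_def by blast
qed

lemma delta_left_ideal: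
  assumes "x \<in> G" "y \<in> G" "u \<in> G" "(x, y) \<in> delta"
  shows "(mult u x, y) \<in> delta"
  using assms delta_iff_Range_subset_Domain h_mult by auto

lemma mult_meet_distrib_left:
  assumes "x \<in> G" "y \<in> G" "z \<in> G"
  shows "mult x (meet y z) = meet (mult x y) (mult x z)"
proof -
  have "h x O (h y \<inter> h z) = (h x O h y) \<inter> (h x O h z)"
    using h_single_valued[of x] assms unfolding single_valued_def by blast
  then show ?thesis
    using assms h_inj h_mult h_meet by simp
qed

lemma xi_antitone:
  assumes "x \<in> G" "y \<in> G" "u \<in> G" "v \<in> G" "sl_le meet x y" "sl_le meet u v" "(y, v) \<in> xi"
  shows "(u, x) \<in> xi"
proof -
  have "h x \<subseteq> h y" "h u \<subseteq> h v"
    using sl_le_iff_subset assms by auto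
  then show ?thesis
    using xi_iff_compatible[of y v] xi_iff_compatible[of u x] assms by blast
qed

lemma mult_meet_distrib_right:
  assumes "x \<in> G" "y \<in> G" "u \<in> G" "(x, y) \<in> xi"
  shows "mult (meet x y) u = meet (mult x u) (mult y u)"
proof -
  have "(h x \<inter> h y) O h u = (h x O h u) \<inter> (h y O h u)"
    using xi_iff_compatible assms by blast
  then show ?thesis
    using assms h_inj h_mult h_meet by simp
qed

lemma axiom_A:
  assumes "n \<ge> 1" "x \<in> G" "y \<in> G" "XX G mult meet xi delta n (meet x y) {x}"
  shows "meet x y = x"
proof -
  have "Domain (h x) \<subseteq> Domain (h x \<inter> h y)"
    using XX_Domain[OF assms(4,1)] assms h_meet by auto
  then have "(a, b) \<in> h y" if "(a, b) \<in> h x" for a b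
    using that h_single_valued[OF assms(2)] unfolding single_valued_def by blast
  then have "h x \<subseteq> h y"
    by auto
  then show ?thesis
    using sl_le_iff_subset assms unfolding sl_le_def by blast
qed

lemma axiom_B:
  assumes "n \<ge> 1" "x \<in> G" "y \<in> G" "XX G mult meet xi delta n (meet x y) {x, y}"
  shows "(x, y) \<in> xi"
proof -
  have "Domain (h x) \<inter> Domain (h y) \<subseteq> Domain (h x \<inter> h y)"
    using XX_Domain[OF assms(4,1)] assms h_meet by auto
  then show ?thesis
    using xi_iff_compatible assms h_single_valued unfolding single_valued_def by blast
qed

lemma axiom_C:
  assumes "n \<ge> 1" "x \<in> G" "y \<in> G" "XX G mult meet xi delta n (mult x y) {x}"
  shows "(x, y) \<in> delta"
proof -
  have "Domain (h x) \<subseteq> Domain (h x O h y)"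
    using XX_Domain[OF assms(4,1)] assms h_mult by auto
  then have "Range (h x) \<subseteq> Domain (h y)"
    using h_single_valued[OF assms(2)] unfolding single_valued_def by blast
  then show ?thesis
    using delta_iff_Range_subset_Domain assms by blast
qed

theorem axioms_hold: "axioms_1_to_4 G mult meet xi delta"
  unfolding axioms_1_to_4_def
  by (intro conjI allI ballI impI zeta_subset_xi)
    (auto intro: xi_left_regular delta_left_ideal mult_meet_distrib_left xi_antitone
      mult_meet_distrib_right axiom_A axiom_B axiom_C)

end

section \<open>Sufficiency\<close>

locale transformative_axioms = semigroup_semilattice +
  assumes axioms_1_to_4: "axioms_1_to_4 G mult meet xi delta"
begin

lemma xi_left_regular: "x \<in> G \<Longrightarrow> u \<in> G \<Longrightarrow> v \<in> G \<Longrightarrow> (u, v) \<in> xi \<Longrightarrow> (mult x u, mult x v) \<in> xi"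
  using axioms_1_to_4 unfolding axioms_1_to_4_def by blast

lemma sl_le_imp_xi:
  assumes "x \<in> G" "y \<in> G" "sl_le meet x y"
  shows "(x, y) \<in> xi"
proof -
  have "zeta G meet \<subseteq> xi"
    using axioms_1_to_4 unfolding axioms_1_to_4_def by blast
  with assms show ?thesis
    unfolding zeta_def by blast
qed

lemma delta_left_ideal: "x \<in> G \<Longrightarrow> y \<in> G \<Longrightarrow> u \<in> G \<Longrightarrow> (x, y) \<in> delta \<Longrightarrow> (mult u x, y) \<in> delta"
  using axioms_1_to_4 unfolding axioms_1_to_4_def by blast

lemma mult_meet_distrib_left:
  "x \<in> G \<Longrightarrow> y \<in> G \<Longrightarrow> z \<in> G \<Longrightarrow> mult x (meet y z) = meet (mult x y) (mult x z)"
  using axioms_1_to_4 unfolding axioms_1_to_4_def by blast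

lemma xi_antitone:
  "x \<in> G \<Longrightarrow> y \<in> G \<Longrightarrow> u \<in> G \<Longrightarrow> v \<in> G \<Longrightarrow> sl_le meet x y \<Longrightarrow> sl_le meet u v \<Longrightarrow> (y, v) \<in> xi
    \<Longrightarrow> (u, x) \<in> xi"
  using axioms_1_to_4 unfolding axioms_1_to_4_def by blast

lemma mult_meet_distrib_right:
  "x \<in> G \<Longrightarrow> y \<in> G \<Longrightarrow> u \<in> G \<Longrightarrow> (x, y) \<in> xi \<Longrightarrow> mult (meet x y) u = meet (mult x u) (mult y u)"
  using axioms_1_to_4 unfolding axioms_1_to_4_def by blast

lemma xi_refl: "x \<in> G \<Longrightarrow> (x, x) \<in> xi"
  by (simp add: sl_le_imp_xi sl_le_def)

lemma derivable_XX:
  assumes "derivable H z"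
  obtains n where "n \<ge> 1" "XX G mult meet xi delta n z H"
  using derivable_imp_XX[OF _ assms] xi_refl by blast

lemma derivable_single_meet:
  assumes "x \<in> G" "y \<in> G" "derivable {x} (meet x y)"
  shows "meet x y = x"
proof -
  obtain n where "n \<ge> 1" "XX G mult meet xi delta n (meet x y) {x}"
    using derivable_XX assms(3) .
  then show ?thesis
    using axioms_1_to_4 assms unfolding axioms_1_to_4_def by blast
qed

lemma derivable_pair_meet:
  assumes "x \<in> G" "y \<in> G" "derivable {x, y} (meet x y)"
  shows "(x, y) \<in> xi"
proof -
  obtain n where "n \<ge> 1" "XX G mult meet xi delta n (meet x y) {x, y}"
    using derivable_XX assms(3) .
  then show ?thesis
    using axioms_1_to_4 assms unfolding axioms_1_to_4_def by blast
qed

lemma derivable_single_mult: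
  assumes "x \<in> G" "y \<in> G" "derivable {x} (mult x y)"
  shows "(x, y) \<in> delta"
proof -
  obtain n where "n \<ge> 1" "XX G mult meet xi delta n (mult x y) {x}"
    using derivable_XX assms(3) .
  then show ?thesis
    using axioms_1_to_4 assms unfolding axioms_1_to_4_def by blast
qed

lemma derivable_above_meet:
  assumes "derivable H u" "derivable H v" "(u, v) \<in> xi" "sl_le meet (meet u v) z" "z \<in> G"
  shows "derivable H z"
  by (rule derivable.node[where u = u and v = v and x = None and y = None and t = None])
    (use assms derivable_in_G in \<open>auto simp: boxdot_le_def dstar_def\<close>)

lemma derivable_meetD:
  assumes "x \<in> G" "y \<in> G" "derivable H (meet x y)"
  shows "derivable H x" "derivable H y"
  using assms derivable_above_meet[OF assms(3,3)] xi_refl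
  by (simp_all add: sl_le_def meet_absorb1 meet_absorb2)

lemma derivable_mult_leftD:
  assumes "w \<in> G" "g \<in> G" "derivable H (mult w g)"
  shows "derivable H w"
  by (rule derivable.node[where u = "mult w g" and v = "mult w g" and x = None and y = None and t = "Some g"])
    (use assms in \<open>simp_all add: xi_refl boxdot_le_def dstar_def sl_le_def\<close>)

lemma derivable_mult_delta:
  assumes "derivable H w" "(w, g) \<in> delta" "g \<in> G"
  shows "derivable H (mult w g)"
  by (rule derivable.node[where u = w and v = w and x = None and y = "Some g" and t = None])
    (use assms derivable_in_G in \<open>simp_all add: xi_refl boxdot_le_def dstar_def sl_le_def\<close>)

lemma derivable_meet_trans:
  assumes "x \<in> G" "y \<in> G" "z \<in> G" "derivable H (meet x y)" "derivable H (meet y z)"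
  shows "derivable H (meet x z)"
proof (rule derivable_above_meet[OF assms(4,5)])
  show "(meet x y, meet y z) \<in> xi"
    by (rule xi_antitone[where y = y and v = y]) (use assms in \<open>auto simp: xi_refl sl_le_def meet_absorb1 meet_absorb2\<close>)
  have "meet (meet x y) (meet y z) = meet x (meet y z)"
    using assms by (metis meet_assoc meet_closed meet_idem)
  moreover have "meet (meet x (meet y z)) (meet x z) = meet x (meet y z)"
    using assms by (metis meet_assoc meet_closed meet_comm meet_idem meet_left_comm)
  ultimately show "sl_le meet (meet (meet x y) (meet y z)) (meet x z)"
    by (simp add: sl_le_def)
qed (use assms in simp)

text \<open>This makes the action defined below independent of representatives.\<close>

lemma derivable_mult_congruent:
  assumes G: "b \<in> G" "b' \<in> G" "g \<in> G" and derivable: "derivable H (meet b b')" "derivable H (mult b g)"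
  shows "derivable H (mult b' g)" "derivable H (meet (mult b g) (mult b' g))"
proof -
  let ?m = "mult (meet b b') g"
  have "(meet b b', b') \<in> xi" "(meet b b', b) \<in> xi"
    using G by (simp_all add: sl_le_imp_xi sl_le_def meet_absorb1 meet_absorb2)
  then have le_b': "meet ?m (mult b' g) = ?m" and le_b: "meet ?m (mult b g) = ?m"
    using G mult_meet_distrib_right[of "meet b b'" b' g] mult_meet_distrib_right[of "meet b b'" b g]
    by (simp_all add: meet_absorb1 meet_absorb2)
  have node: "derivable H w" if "sl_le meet ?m w" "w \<in> G" for w
    by (rule derivable.node[where u = "meet b b'" and v = b and x = "Some g" and y = None and t = None])
      (use G derivable that in \<open>auto simp: boxdot_le_def dstar_def sl_le_imp_xi sl_le_def meet_absorb1\<close>)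
  show "derivable H (mult b' g)"
    using node le_b' G by (simp add: sl_le_def)
  have "meet ?m (meet (mult b g) (mult b' g)) = ?m"
    using le_b le_b' G by (metis meet_assoc mult_closed meet_closed)
  then show "derivable H (meet (mult b g) (mult b' g))"
    using node G by (simp add: sl_le_def)
qed

definition lmul :: "'a option \<Rightarrow> 'a \<Rightarrow> 'a" where
  "lmul a g = (case a of None \<Rightarrow> g | Some b \<Rightarrow> mult b g)"

lemma lmul_simps [simp]: "lmul None g = g" "lmul (Some b) g = mult b g"
  by (simp_all add: lmul_def)

lemma lmul_closed [simp]: "a \<in> Gstar G \<Longrightarrow> g \<in> G \<Longrightarrow> lmul a g \<in> G"
  by (auto simp: Gstar_def)

lemma lmul_mult: "a \<in> Gstar G \<Longrightarrow> x \<in> G \<Longrightarrow> y \<in> G \<Longrightarrow> lmul (Some (lmul a x)) y = lmul a (mult x y)"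
  by (auto simp: Gstar_def mult_assoc)

lemma lmul_meet: "a \<in> Gstar G \<Longrightarrow> x \<in> G \<Longrightarrow> y \<in> G \<Longrightarrow> lmul a (meet x y) = meet (lmul a x) (lmul a y)"
  by (auto simp: Gstar_def mult_meet_distrib_left)

text \<open>A point is a triple (p, q, a) with a \<in> G* derivable from {p, q}, taken up to the congruence
  "a \<curlywedge> a' is derivable" (canon picks a representative, None stands for the identity e). The
  element g sends a to ag whenever ag is still derivable. Points with p = q detect \<le> and \<delta>, the
  others detect \<xi>.\<close>

definition canon :: "'a set \<Rightarrow> 'a \<Rightarrow> 'a" where
  "canon H b = (SOME c. c \<in> G \<and> derivable H (meet b c))"

definition point :: "'a \<Rightarrow> 'a \<Rightarrow> 'a option \<Rightarrow> 'a \<times> 'a \<times> 'a option" where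
  "point p q a = (p, q, map_option (canon {p, q}) a)"

definition admissible :: "'a \<Rightarrow> 'a \<Rightarrow> 'a option \<Rightarrow> bool" where
  "admissible p q a \<longleftrightarrow> p \<in> G \<and> q \<in> G \<and> a \<in> Gstar G \<and> pred_option (derivable {p, q}) a"

definition points :: "('a \<times> 'a \<times> 'a option) set" where
  "points = {point p q a | p q a. admissible p q a}"

definition act :: "'a \<Rightarrow> (('a \<times> 'a \<times> 'a option) \<times> ('a \<times> 'a \<times> 'a option)) set" where
  "act g = {(point p q a, point p q (Some (lmul a g))) | p q a. admissible p q a \<and> derivable {p, q} (lmul a g)}"

lemma canon_derivable:
  assumes "b \<in> G" "derivable H b"
  shows "canon H b \<in> G" "derivable H (meet b (canon H b))"
  using someI[of "\<lambda>c. c \<in> G \<and> derivable H (meet b c)" b] assms unfolding canon_def by auto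

lemma canon_eq_iff:
  assumes G: "b \<in> G" "b' \<in> G" and derivable: "derivable H b" "derivable H b'"
  shows "canon H b = canon H b' \<longleftrightarrow> derivable H (meet b b')"
proof
  assume "canon H b = canon H b'"
  then have "derivable H (meet (canon H b) b')"
    using canon_derivable[OF G(2) derivable(2)] canon_derivable[OF G(1) derivable(1)] G
    by (simp add: meet_comm)
  then show "derivable H (meet b b')"
    using derivable_meet_trans canon_derivable[OF G(1) derivable(1)] G by blast
next
  assume "derivable H (meet b b')"
  then have "derivable H (meet b c) \<longleftrightarrow> derivable H (meet b' c)" if "c \<in> G" for c
    using derivable_meet_trans[of b' b c H] derivable_meet_trans[of b b' c H] that G
    by (auto simp: meet_comm)
  then show "canon H b = canon H b'"
    unfolding canon_def by metis
qed

lemma points_subset: "points \<subseteq> G \<times> G \<times> Gstar G"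
  unfolding points_def point_def admissible_def using canon_derivable by (auto simp: Gstar_def)

lemma point_eq_iff:
  assumes "admissible p q a" "admissible p q a'"
  shows "point p q a = point p q a' \<longleftrightarrow> rel_option (\<lambda>b b'. derivable {p, q} (meet b b')) a a'"
  using assms canon_eq_iff
  by (cases a; cases a') (auto simp: point_def admissible_def)

lemma admissible_base: "p \<in> G \<Longrightarrow> q \<in> G \<Longrightarrow> admissible p q None"
  by (simp add: admissible_def)

lemma admissible_step:
  "admissible p q a \<Longrightarrow> g \<in> G \<Longrightarrow> derivable {p, q} (lmul a g) \<Longrightarrow> admissible p q (Some (lmul a g))"
  by (simp add: admissible_def)

lemma act_iff:
  assumes adm: "admissible p q a" and g: "g \<in> G"
  shows "(point p q a, r) \<in> act g \<longleftrightarrow> derivable {p, q} (lmul a g) \<and> r = point p q (Some (lmul a g))"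
proof
  assume "(point p q a, r) \<in> act g"
  then obtain a' where eq: "point p q a = point p q a'" and r: "r = point p q (Some (lmul a' g))"
    and adm': "admissible p q a'" and derivable': "derivable {p, q} (lmul a' g)"
    unfolding act_def by (auto simp: point_def)
  have "rel_option (\<lambda>b b'. derivable {p, q} (meet b b')) a' a"
    using point_eq_iff[OF adm' adm] eq by simp
  then have "derivable {p, q} (lmul a g) \<and> derivable {p, q} (meet (lmul a' g) (lmul a g))"
    using adm adm' derivable' g derivable_mult_congruent
    by (cases a'; cases a) (auto simp: admissible_def)
  moreover have "point p q (Some (lmul a' g)) = point p q (Some (lmul a g)) \<longleftrightarrow>
      derivable {p, q} (meet (lmul a' g) (lmul a g))"
    using point_eq_iff admissible_step adm adm' derivable' g calculation by simp
  ultimately show "derivable {p, q} (lmul a g) \<and> r = point p q (Some (lmul a g))"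
    using r by simp
next
  assume "derivable {p, q} (lmul a g) \<and> r = point p q (Some (lmul a g))"
  then show "(point p q a, r) \<in> act g"
    using adm unfolding act_def by blast
qed

lemma act_domainE:
  assumes "(r, s) \<in> act g"
  obtains p q a where "r = point p q a" "admissible p q a"
  using assms unfolding act_def by blast

lemma act_subset_points: "g \<in> G \<Longrightarrow> act g \<subseteq> points \<times> points"
  unfolding act_def points_def by (blast intro: admissible_step)

lemma act_single_valued:
  assumes "g \<in> G"
  shows "single_valued (act g)"
proof (rule single_valuedI)
  fix r s s' assume "(r, s) \<in> act g" "(r, s') \<in> act g"
  moreover from this obtain p q a where "r = point p q a" "admissible p q a"
    by (blast elim: act_domainE)
  ultimately show "s = s'"
    using act_iff assms by simp
qed

lemma act_mult:
  assumes x: "x \<in> G" and y: "y \<in> G"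
  shows "act (mult x y) = act x O act y"
proof (intro subset_antisym subrelI)
  fix r s assume rs: "(r, s) \<in> act (mult x y)"
  then obtain p q a where r: "r = point p q a" and adm: "admissible p q a"
    by (blast elim: act_domainE)
  then have a: "a \<in> Gstar G"
    by (simp add: admissible_def)
  have der_xy: "derivable {p, q} (lmul a (mult x y))" and s: "s = point p q (Some (lmul a (mult x y)))"
    using act_iff[OF adm] rs r x y by auto
  then have der_x: "derivable {p, q} (lmul a x)"
    using derivable_mult_leftD[of "lmul a x" y] lmul_mult[OF a x y] a x y by simp
  have adm_x: "admissible p q (Some (lmul a x))"
    using admissible_step[OF adm x der_x] .
  have "(r, point p q (Some (lmul a x))) \<in> act x"
    using act_iff[OF adm x] der_x r by simp
  moreover have "(point p q (Some (lmul a x)), s) \<in> act y"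
    using act_iff[OF adm_x y] der_xy s lmul_mult[OF a x y] by simp
  ultimately show "(r, s) \<in> act x O act y"
    by blast
next
  fix r s assume "(r, s) \<in> act x O act y"
  then obtain t where rt: "(r, t) \<in> act x" and ts: "(t, s) \<in> act y"
    by blast
  then obtain p q a where r: "r = point p q a" and adm: "admissible p q a"
    by (blast elim: act_domainE)
  then have a: "a \<in> Gstar G"
    by (simp add: admissible_def)
  have der_x: "derivable {p, q} (lmul a x)" and t: "t = point p q (Some (lmul a x))"
    using act_iff[OF adm x] rt r by auto
  have "derivable {p, q} (lmul a (mult x y))" "s = point p q (Some (lmul a (mult x y)))"
    using act_iff[OF admissible_step[OF adm x der_x] y] ts t lmul_mult[OF a x y] by auto
  then show "(r, s) \<in> act (mult x y)"
    using act_iff[OF adm] r x y by simp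
qed

lemma point_Some_eq_iff:
  assumes "p \<in> G" "q \<in> G" "b \<in> G" "b' \<in> G" "derivable {p, q} b" "derivable {p, q} b'"
  shows "point p q (Some b) = point p q (Some b') \<longleftrightarrow> derivable {p, q} (meet b b')"
  using point_eq_iff[of p q "Some b" "Some b'"] assms by (simp add: admissible_def)

lemma act_meet:
  assumes x: "x \<in> G" and y: "y \<in> G"
  shows "act (meet x y) = act x \<inter> act y"
proof (intro subset_antisym subrelI)
  fix r s assume rs: "(r, s) \<in> act (meet x y)"
  then obtain p q a where r: "r = point p q a" and adm: "admissible p q a"
    by (blast elim: act_domainE)
  then have a: "a \<in> Gstar G" and pq: "p \<in> G" "q \<in> G"
    by (simp_all add: admissible_def)
  let ?X = "lmul a x" and ?Y = "lmul a y"
  have XY: "?X \<in> G" "?Y \<in> G"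
    using a x y by simp_all
  have der: "derivable {p, q} (meet ?X ?Y)" and s: "s = point p q (Some (meet ?X ?Y))"
    using act_iff[OF adm] rs r x y lmul_meet[OF a x y] by auto
  then have der_X: "derivable {p, q} ?X" and der_Y: "derivable {p, q} ?Y"
    using derivable_meetD[OF XY] by blast+
  have "derivable {p, q} (meet (meet ?X ?Y) ?X)" "derivable {p, q} (meet (meet ?X ?Y) ?Y)"
    using der XY by (simp_all only: meet_absorb1 meet_absorb2)
  then have "s = point p q (Some ?X)" "s = point p q (Some ?Y)"
    using s point_Some_eq_iff[OF pq _ _ der der_X] point_Some_eq_iff[OF pq _ _ der der_Y] XY by simp_all
  with der_X der_Y show "(r, s) \<in> act x \<inter> act y"
    using act_iff[OF adm] r x y by simp
next
  fix r s assume "(r, s) \<in> act x \<inter> act y"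
  then have rx: "(r, s) \<in> act x" and ry: "(r, s) \<in> act y"
    by auto
  then obtain p q a where r: "r = point p q a" and adm: "admissible p q a"
    by (blast elim: act_domainE)
  then have a: "a \<in> Gstar G" and pq: "p \<in> G" "q \<in> G"
    by (simp_all add: admissible_def)
  let ?X = "lmul a x" and ?Y = "lmul a y"
  have XY: "?X \<in> G" "?Y \<in> G"
    using a x y by simp_all
  have der: "derivable {p, q} ?X" "derivable {p, q} ?Y"
    and s: "s = point p q (Some ?X)" "s = point p q (Some ?Y)"
    using act_iff[OF adm] rx ry r x y by auto
  then have der_meet: "derivable {p, q} (meet ?X ?Y)"
    using point_Some_eq_iff[OF pq XY der] by simp
  then have "derivable {p, q} (meet (meet ?X ?Y) ?X)"
    using XY by (simp only: meet_absorb1)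
  then have "s = point p q (Some (meet ?X ?Y))"
    using s point_Some_eq_iff[OF pq _ _ der_meet der(1)] XY by simp
  then show "(r, s) \<in> act (meet x y)"
    using act_iff[OF adm] r x y der_meet lmul_meet[OF a x y] by simp
qed

lemma act_start:
  assumes "p \<in> G" "q \<in> G" "g \<in> G" "derivable {p, q} g"
  shows "(point p q None, point p q (Some g)) \<in> act g"
  using act_iff[OF admissible_base] assms by simp

lemma act_inj:
  assumes x: "x \<in> G" and y: "y \<in> G" and eq: "act x = act y"
  shows "x = y"
proof -
  have "meet u w = u" if u: "u \<in> G" and w: "w \<in> G" and eq: "act u = act w" for u w
  proof -
    have der_u: "derivable {u, u} u"
      using u by (simp add: derivable.hyp)
    then have "(point u u None, point u u (Some u)) \<in> act w"
      using act_start[OF u u u] eq by simp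
    then have der_w: "derivable {u, u} w" and "point u u (Some u) = point u u (Some w)"
      using act_iff[OF admissible_base[OF u u] w] by auto
    then have "derivable {u} (meet u w)"
      using point_Some_eq_iff[OF u u u w der_u der_w] by simp
    then show ?thesis
      using derivable_single_meet u w by blast
  qed
  from this[OF x y eq] this[OF y x eq[symmetric]] show ?thesis
    using meet_comm[OF x y] by simp
qed

lemma act_xi_iff:
  assumes x: "x \<in> G" and y: "y \<in> G"
  shows "(x, y) \<in> xi \<longleftrightarrow> (\<forall>r s s'. (r, s) \<in> act x \<longrightarrow> (r, s') \<in> act y \<longrightarrow> s = s')"
proof (intro iffI allI impI)
  fix r s s' assume xy: "(x, y) \<in> xi" and rs: "(r, s) \<in> act x" and rs': "(r, s') \<in> act y"
  then obtain p q a where r: "r = point p q a" and adm: "admissible p q a"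
    by (blast elim: act_domainE)
  then have a: "a \<in> Gstar G" and pq: "p \<in> G" "q \<in> G"
    by (simp_all add: admissible_def)
  let ?X = "lmul a x" and ?Y = "lmul a y"
  have XY: "?X \<in> G" "?Y \<in> G"
    using a x y by simp_all
  have der: "derivable {p, q} ?X" "derivable {p, q} ?Y"
    and s: "s = point p q (Some ?X)" "s' = point p q (Some ?Y)"
    using act_iff[OF adm] rs rs' r x y by auto
  have "(?X, ?Y) \<in> xi"
    using xy a x y xi_left_regular by (auto simp: Gstar_def)
  then have "derivable {p, q} (meet ?X ?Y)"
    using derivable_above_meet[OF der] XY by (simp add: sl_le_def)
  then show "s = s'"
    using s point_Some_eq_iff[OF pq XY der] by simp
next
  assume compatible: "\<forall>r s s'. (r, s) \<in> act x \<longrightarrow> (r, s') \<in> act y \<longrightarrow> s = s'"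
  have der: "derivable {x, y} x" "derivable {x, y} y"
    using x y by (simp_all add: derivable.hyp)
  then have "point x y (Some x) = point x y (Some y)"
    using compatible act_start[OF x y x] act_start[OF x y y] by blast
  then have "derivable {x, y} (meet x y)"
    using point_Some_eq_iff[OF x y x y der] by simp
  then show "(x, y) \<in> xi"
    using derivable_pair_meet x y by blast
qed

lemma act_delta_iff:
  assumes x: "x \<in> G" and y: "y \<in> G"
  shows "(x, y) \<in> delta \<longleftrightarrow> Range (act x) \<subseteq> Domain (act y)"
proof
  assume xy: "(x, y) \<in> delta"
  show "Range (act x) \<subseteq> Domain (act y)"
  proof
    fix s assume "s \<in> Range (act x)"
    then obtain r where rs: "(r, s) \<in> act x"
      by blast
    then obtain p q a where r: "r = point p q a" and adm: "admissible p q a"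
      by (blast elim: act_domainE)
    then have a: "a \<in> Gstar G"
      by (simp add: admissible_def)
    have der: "derivable {p, q} (lmul a x)" and s: "s = point p q (Some (lmul a x))"
      using act_iff[OF adm x] rs r by auto
    have "(lmul a x, y) \<in> delta"
      using xy a x y delta_left_ideal by (auto simp: Gstar_def)
    then have "derivable {p, q} (lmul (Some (lmul a x)) y)"
      using derivable_mult_delta[OF der] y by simp
    then show "s \<in> Domain (act y)"
      using act_iff[OF admissible_step[OF adm x der] y] s by blast
  qed
next
  assume range: "Range (act x) \<subseteq> Domain (act y)"
  have der: "derivable {x, x} x"
    using x by (simp add: derivable.hyp)
  then have "point x x (Some x) \<in> Domain (act y)"
    using act_start[OF x x x] range by blast
  then have "derivable {x, x} (mult x y)"
    using act_iff[OF admissible_step[OF admissible_base[OF x x] x] y] der by auto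
  then show "(x, y) \<in> delta"
    using derivable_single_mult x y by simp
qed

theorem act_representation:
  assumes "G \<noteq> {}"
  shows "is_iso_to_transformative G mult meet xi delta points (act ` G) act"
  unfolding is_iso_to_transformative_def
proof (intro conjI ballI)
  obtain p where "p \<in> G"
    using assms by blast
  then have "points \<noteq> {}"
    unfolding points_def using admissible_base by blast
  then show "cap_semigroup_of_transformations points (act ` G)"
    unfolding cap_semigroup_of_transformations_def transformation_def
    using act_subset_points act_single_valued act_mult[symmetric] act_meet[symmetric]
    by (auto simp del: mult_closed meet_closed intro: mult_closed meet_closed)
  show "bij_betw act G (act ` G)"
    unfolding bij_betw_def inj_on_def using act_inj by blast
  fix x y assume xy: "x \<in> G" "y \<in> G"
  then show "act (mult x y) = act x O act y" "act (meet x y) = act x \<inter> act y"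
    using act_mult act_meet by simp_all
  show "(x, y) \<in> xi \<longleftrightarrow> (act x, act y) \<in> xi_Phi (act ` G)"
    unfolding xi_Phi_def using act_xi_iff[OF xy] xy by blast
  show "(x, y) \<in> delta \<longleftrightarrow> (act x, act y) \<in> delta_Phi (act ` G)"
    unfolding delta_Phi_def using act_delta_iff[OF xy] xy by blast
qed

end

section \<open>Changing the base set\<close>

lemma single_valued_iff_converse_relcomp: "single_valued r \<longleftrightarrow> r\<inverse> O r \<subseteq> Id"
  unfolding single_valued_def by blast

lemma xi_Phi_iff: "(f, g) \<in> xi_Phi \<Phi> \<longleftrightarrow> f \<in> \<Phi> \<and> g \<in> \<Phi> \<and> f\<inverse> O g \<subseteq> Id"
  unfolding xi_Phi_def by blast

definition rename :: "('c \<Rightarrow> 'd) \<Rightarrow> ('c \<times> 'c) set \<Rightarrow> ('d \<times> 'd) set" where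
  "rename f r = map_prod f f ` r"

lemma Domain_rename: "Domain (rename f r) = f ` Domain r"
  unfolding rename_def by force

lemma Range_rename: "Range (rename f r) = f ` Range r"
  unfolding rename_def by force

lemma rename_converse: "(rename f r)\<inverse> = rename f (r\<inverse>)"
  unfolding rename_def by force

lemma rename_subset_Id_iff:
  assumes "inj_on f A" "r \<subseteq> A \<times> A"
  shows "rename f r \<subseteq> Id \<longleftrightarrow> r \<subseteq> Id"
  using assms unfolding rename_def inj_on_def by (fastforce simp: subset_iff)

lemma rename_eq_rename_iff:
  assumes "inj_on f A" "r \<subseteq> A \<times> A" "s \<subseteq> A \<times> A"
  shows "rename f r = rename f s \<longleftrightarrow> r = s"
  unfolding rename_def using inj_on_image_eq_iff[OF map_prod_inj_on[OF assms(1,1)] assms(2,3)] .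

lemma rename_Int:
  assumes "inj_on f A" "r \<subseteq> A \<times> A" "s \<subseteq> A \<times> A"
  shows "rename f (r \<inter> s) = rename f r \<inter> rename f s"
  unfolding rename_def using inj_on_image_Int[OF map_prod_inj_on[OF assms(1,1)] assms(2,3)] .

lemma inj_on_image_subset_image_iff:
  "inj_on f A \<Longrightarrow> X \<subseteq> A \<Longrightarrow> Y \<subseteq> A \<Longrightarrow> f ` X \<subseteq> f ` Y \<longleftrightarrow> X \<subseteq> Y"
  unfolding inj_on_def by blast

lemma rename_relcomp:
  assumes f: "inj_on f A" and "r \<subseteq> A \<times> A" "s \<subseteq> A \<times> A"
  shows "rename f (r O s) = rename f r O rename f s"
proof
  show "rename f (r O s) \<subseteq> rename f r O rename f s"
    unfolding rename_def by auto
  show "rename f r O rename f s \<subseteq> rename f (r O s)"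
  proof (rule subrelI)
    fix a c assume "(a, c) \<in> rename f r O rename f s"
    then obtain a' b b' c' where "a = f a'" "c = f c'" "(a', b) \<in> r" "(b', c') \<in> s" "f b = f b'"
      unfolding rename_def by auto
    moreover from this have "b = b'"
      using inj_onD[OF f] assms by blast
    ultimately show "(a, c) \<in> rename f (r O s)"
      unfolding rename_def by auto
  qed
qed

lemma is_iso_to_transformative_rename:
  assumes iso: "is_iso_to_transformative G mult meet xi delta A \<Phi> h" and f: "inj_on f A"
  shows "is_iso_to_transformative G mult meet xi delta (f ` A) (rename f ` \<Phi>) (rename f \<circ> h)"
proof -
  have cap: "cap_semigroup_of_transformations A \<Phi>" and bij: "bij_betw h G \<Phi>"
    and hom: "\<forall>x\<in>G. \<forall>y\<in>G. h (mult x y) = h x O h y \<and> h (meet x y) = h x \<inter> h y \<and>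
        ((x, y) \<in> xi \<longleftrightarrow> (h x, h y) \<in> xi_Phi \<Phi>) \<and> ((x, y) \<in> delta \<longleftrightarrow> (h x, h y) \<in> delta_Phi \<Phi>)"
    using iso unfolding is_iso_to_transformative_def by auto
  have sub: "r \<subseteq> A \<times> A" if "r \<in> \<Phi>" for r
    using cap that unfolding cap_semigroup_of_transformations_def transformation_def by blast
  have relcomp: "rename f (r O s) = rename f r O rename f s"
    and Int: "rename f (r \<inter> s) = rename f r \<inter> rename f s"
    and compatible: "(rename f r)\<inverse> O rename f s \<subseteq> Id \<longleftrightarrow> r\<inverse> O s \<subseteq> Id"
    and range: "Range (rename f r) \<subseteq> Domain (rename f s) \<longleftrightarrow> Range r \<subseteq> Domain s"
    if "r \<in> \<Phi>" "s \<in> \<Phi>" for r s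
  proof -
    have rs: "r \<subseteq> A \<times> A" "s \<subseteq> A \<times> A"
      using sub that by simp_all
    show "rename f (r O s) = rename f r O rename f s" "rename f (r \<inter> s) = rename f r \<inter> rename f s"
      using rename_relcomp[OF f rs] rename_Int[OF f rs] by simp_all
    have conv: "r\<inverse> \<subseteq> A \<times> A" and comp: "r\<inverse> O s \<subseteq> A \<times> A"
      using rs by blast+
    have "(rename f r)\<inverse> O rename f s = rename f (r\<inverse> O s)"
      using rename_relcomp[OF f conv rs(2)] by (simp add: rename_converse)
    then show "(rename f r)\<inverse> O rename f s \<subseteq> Id \<longleftrightarrow> r\<inverse> O s \<subseteq> Id"
      using rename_subset_Id_iff[OF f comp] by simp
    have "Range r \<subseteq> A" "Domain s \<subseteq> A"
      using rs by blast+
    then show "Range (rename f r) \<subseteq> Domain (rename f s) \<longleftrightarrow> Range r \<subseteq> Domain s"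
      unfolding Range_rename Domain_rename by (rule inj_on_image_subset_image_iff[OF f])
  qed
  have "cap_semigroup_of_transformations (f ` A) (rename f ` \<Phi>)"
    unfolding cap_semigroup_of_transformations_def transformation_def
  proof (intro conjI ballI)
    show "f ` A \<noteq> {}"
      using cap unfolding cap_semigroup_of_transformations_def by blast
  next
    fix g assume "g \<in> rename f ` \<Phi>"
    then obtain r where r: "r \<in> \<Phi>" "g = rename f r"
      by blast
    show "g \<subseteq> f ` A \<times> f ` A"
      using sub[OF r(1)] r(2) unfolding rename_def by auto
    have "single_valued r"
      using cap r(1) unfolding cap_semigroup_of_transformations_def transformation_def by blast
    then show "single_valued g"
      using compatible[OF r(1) r(1)] r(2) unfolding single_valued_iff_converse_relcomp by simp
  next
    fix g g' assume "g \<in> rename f ` \<Phi>" "g' \<in> rename f ` \<Phi>"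
    then obtain r s where rs: "r \<in> \<Phi>" "s \<in> \<Phi>" "g = rename f r" "g' = rename f s"
      by blast
    moreover have "r O s \<in> \<Phi>" "r \<inter> s \<in> \<Phi>"
      using cap rs unfolding cap_semigroup_of_transformations_def by blast+
    ultimately show "g O g' \<in> rename f ` \<Phi>" "g \<inter> g' \<in> rename f ` \<Phi>"
      using relcomp Int by (metis image_eqI)+
  qed
  moreover have "bij_betw (rename f \<circ> h) G (rename f ` \<Phi>)"
  proof (rule bij_betw_trans[OF bij])
    show "bij_betw (rename f) \<Phi> (rename f ` \<Phi>)"
      unfolding bij_betw_def inj_on_def using rename_eq_rename_iff[OF f] sub by blast
  qed
  moreover have "(rename f \<circ> h) (mult x y) = (rename f \<circ> h) x O (rename f \<circ> h) y"
    and "(rename f \<circ> h) (meet x y) = (rename f \<circ> h) x \<inter> (rename f \<circ> h) y"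
    and "(x, y) \<in> xi \<longleftrightarrow> ((rename f \<circ> h) x, (rename f \<circ> h) y) \<in> xi_Phi (rename f ` \<Phi>)"
    and "(x, y) \<in> delta \<longleftrightarrow> ((rename f \<circ> h) x, (rename f \<circ> h) y) \<in> delta_Phi (rename f ` \<Phi>)"
    if xy: "x \<in> G" "y \<in> G" for x y
  proof -
    have h: "h x \<in> \<Phi>" "h y \<in> \<Phi>"
      using bij xy unfolding bij_betw_def by blast+
    show "(rename f \<circ> h) (mult x y) = (rename f \<circ> h) x O (rename f \<circ> h) y"
      "(rename f \<circ> h) (meet x y) = (rename f \<circ> h) x \<inter> (rename f \<circ> h) y"
      using hom xy relcomp[OF h] Int[OF h] by simp_all
    have "(x, y) \<in> xi \<longleftrightarrow> (h x)\<inverse> O h y \<subseteq> Id"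
      using hom xy h by (simp add: xi_Phi_iff)
    then show "(x, y) \<in> xi \<longleftrightarrow> ((rename f \<circ> h) x, (rename f \<circ> h) y) \<in> xi_Phi (rename f ` \<Phi>)"
      using compatible[OF h] h by (simp add: xi_Phi_iff)
    have "(x, y) \<in> delta \<longleftrightarrow> Range (h x) \<subseteq> Domain (h y)"
      using hom xy h by (simp add: delta_Phi_def)
    then show "(x, y) \<in> delta \<longleftrightarrow> ((rename f \<circ> h) x, (rename f \<circ> h) y) \<in> delta_Phi (rename f ` \<Phi>)"
      using range[OF h] h by (simp add: delta_Phi_def)
  qed
  ultimately show ?thesis
    unfolding is_iso_to_transformative_def by blast
qed

lemma inj_on_triples_into_Plus_nat:
  includes cardinal_syntax
  fixes G :: "'a set"
  obtains f :: "'a \<times> 'a \<times> 'a option \<Rightarrow> 'a + nat" where "inj_on f (G \<times> G \<times> Gstar G)"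
proof (cases "finite G")
  case True
  then have "finite (G \<times> G \<times> Gstar G)"
    by (simp add: Gstar_def)
  then obtain g :: "_ \<Rightarrow> nat" where "inj_on g (G \<times> G \<times> Gstar G)"
    using finite_imp_inj_to_nat_seg by blast
  then have "inj_on (Inr \<circ> g) (G \<times> G \<times> Gstar G)"
    by (simp add: inj_on_def)
  then show ?thesis
    using that by blast
next
  case False
  then obtain g0 where "g0 \<in> G"
    using infinite_imp_nonempty by blast
  moreover have "infinite (G - {g0})"
    using False by simp
  then obtain g1 where "g1 \<in> G - {g0}"
    using infinite_imp_nonempty by blast
  ultimately have g: "g0 \<in> G" "g1 \<in> G" "g0 \<noteq> g1"
    by auto
  \<comment> \<open>None is encoded by a pair of distinct elements.\<close>
  define e :: "'a \<times> 'a \<times> 'a option \<Rightarrow> 'a \<times> 'a \<times> 'a \<times> 'a"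
    where "e = (\<lambda>(p, q, a). (p, q, case a of None \<Rightarrow> (g0, g1) | Some b \<Rightarrow> (b, b)))"
  have e: "inj_on e (G \<times> G \<times> Gstar G)" "e ` (G \<times> G \<times> Gstar G) \<subseteq> G \<times> G \<times> G \<times> G"
    unfolding inj_on_def e_def Gstar_def using g by (auto split: option.splits)
  have card: "Card_order |G|" "\<not> finite (Field |G| )"
    using card_of_Card_order False by (auto simp: Field_card_of)
  have "|G| \<le>o |G|"
    by (simp add: ordLeq_refl card_of_Card_order)
  then have "|G \<times> G \<times> G \<times> G| \<le>o |G|"
    using card_of_Times_ordLeq_infinite_Field[OF card(2) _ _ card(1)] by metis
  then obtain h where h: "inj_on h (G \<times> G \<times> G \<times> G)" "h ` (G \<times> G \<times> G \<times> G) \<subseteq> G"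
    unfolding card_of_ordLeq[symmetric] by blast
  have "inj_on (Inl \<circ> h \<circ> e) (G \<times> G \<times> Gstar G)"
    using comp_inj_on[OF e(1) inj_on_subset[OF h(1) e(2)]] by (simp add: inj_on_def)
  then show ?thesis
    using that by blast
qed

lemma (in transformative_axioms) representation_on_Plus_nat:
  "\<exists>(A :: ('a + nat) set) \<Phi> h. is_iso_to_transformative G mult meet xi delta A \<Phi> h"
proof (cases "G = {}")
  case True
  then have "is_iso_to_transformative G mult meet xi delta {Inr 0} {} (\<lambda>_. {})"
    unfolding is_iso_to_transformative_def cap_semigroup_of_transformations_def bij_betw_def
    by simp
  then show ?thesis
    by blast
next
  case False
  obtain f :: "'a \<times> 'a \<times> 'a option \<Rightarrow> 'a + nat" where "inj_on f (G \<times> G \<times> Gstar G)"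
    using inj_on_triples_into_Plus_nat .
  then have "inj_on f points"
    using inj_on_subset points_subset by blast
  then show ?thesis
    using is_iso_to_transformative_rename[OF act_representation[OF False]] by blast
qed

lemma (in semigroup_semilattice) iso_imp_axioms:
  "is_iso_to_transformative G mult meet xi delta A \<Phi> h \<Longrightarrow> axioms_1_to_4 G mult meet xi delta"
  by (rule transformation_representation.axioms_hold) unfold_locales

theorem theorem2:
  fixes G :: "'a set" and mult meet :: "'a \<Rightarrow> 'a \<Rightarrow> 'a" and xi delta :: "('a \<times> 'a) set"
  assumes "semigroup_on G mult"
    and "semilattice_on G meet"
    and "xi \<subseteq> G \<times> G" and "delta \<subseteq> G \<times> G"
  shows "((\<exists>(A :: 'b set) \<Phi> h. is_iso_to_transformative G mult meet xi delta A \<Phi> h)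
           \<longrightarrow> axioms_1_to_4 G mult meet xi delta)
    \<and> ((\<exists>(A :: ('a + nat) set) \<Phi> h. is_iso_to_transformative G mult meet xi delta A \<Phi> h)
           \<longleftrightarrow> axioms_1_to_4 G mult meet xi delta)"
proof -
  interpret semigroup_semilattice G mult meet xi delta
    using assms(1,2) by unfold_locales
  show ?thesis
  proof (intro conjI impI iffI)
    show "axioms_1_to_4 G mult meet xi delta"
      if "\<exists>(A :: 'b set) \<Phi> h. is_iso_to_transformative G mult meet xi delta A \<Phi> h"
      using that iso_imp_axioms by blast
    show "axioms_1_to_4 G mult meet xi delta"
      if "\<exists>(A :: ('a + nat) set) \<Phi> h. is_iso_to_transformative G mult meet xi delta A \<Phi> h"
      using that iso_imp_axioms by blast
    show "\<exists>(A :: ('a + nat) set) \<Phi> h. is_iso_to_transformative G mult meet xi delta A \<Phi> h"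
      if "axioms_1_to_4 G mult meet xi delta"
    proof -
      interpret transformative_axioms G mult meet xi delta
        using that by unfold_locales
      show ?thesis
        by (rule representation_on_Plus_nat)
    qed
  qed
qed

end
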